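(* Let $q$ and $k$ be odd positive integers and $m$ an even positive integer. No latin square of order $mq$ of $q$-step type possesses a $k$-plex.
   Context: A latin square of order $n$ is an $n\times n$ array of $n$ symbols in which each symbol occurs exactly once in each row and column. A $k$-plex in a latin square of order $n$ is a set of $kn$ cells containing exactly $k$ cells from each row, exactly $k$ cells from each column, and exactly $k$ occurrences of each symbol. A latin square of order $mq$ is of $q$-step type if it can be partitioned into an $m\times m$ array of $q\times q$ blocks $A_{ij}$ such that each block is a latin subsquare of order $q$ and two blocks $A_{ij}$, $A_{i'j'}$ contain the same set of symbols if and only if $i+j\equiv i'+j'\pmod m$. *)

theory Defs
  imports Main
begin

definition latin_square :: "nat \<Rightarrow> (nat \<Rightarrow> nat \<Rightarrow> nat) \<Rightarrow> bool" where
  "latin_square n L \<longleftrightarrow>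
     (\<forall>i<n. bij_betw (\<lambda>j. L i j) {0..<n} {0..<n}) \<and>
     (\<forall>j<n. bij_betw (\<lambda>i. L i j) {0..<n} {0..<n})"

definition is_kplex :: "nat \<Rightarrow> nat \<Rightarrow> (nat \<Rightarrow> nat \<Rightarrow> nat) \<Rightarrow> (nat \<times> nat) set \<Rightarrow> bool" where
  "is_kplex n k L P \<longleftrightarrow>
     P \<subseteq> {0..<n} \<times> {0..<n} \<and> card P = k * n \<and>
     (\<forall>i<n. card {j. (i, j) \<in> P} = k) \<and>
     (\<forall>j<n. card {i. (i, j) \<in> P} = k) \<and>
     (\<forall>s<n. card {c \<in> P. L (fst c) (snd c) = s} = k)"

definition block_range :: "nat \<Rightarrow> nat \<Rightarrow> nat set" where
  "block_range q a = {a * q..<a * q + q}"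

definition block_symbols :: "nat \<Rightarrow> (nat \<Rightarrow> nat \<Rightarrow> nat) \<Rightarrow> nat \<Rightarrow> nat \<Rightarrow> nat set" where
  "block_symbols q L a b = (\<lambda>(i, j). L i j) ` (block_range q a \<times> block_range q b)"

definition latin_subsquare_block :: "nat \<Rightarrow> (nat \<Rightarrow> nat \<Rightarrow> nat) \<Rightarrow> nat \<Rightarrow> nat \<Rightarrow> bool" where
  "latin_subsquare_block q L a b \<longleftrightarrow>
     card (block_symbols q L a b) = q \<and>
     (\<forall>i\<in>block_range q a. bij_betw (\<lambda>j. L i j) (block_range q b) (block_symbols q L a b)) \<and>
     (\<forall>j\<in>block_range q b. bij_betw (\<lambda>i. L i j) (block_range q a) (block_symbols q L a b))"

definition q_step_type :: "nat \<Rightarrow> nat \<Rightarrow> (nat \<Rightarrow> nat \<Rightarrow> nat) \<Rightarrow> bool" where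
  "q_step_type m q L \<longleftrightarrow>
     (\<forall>a<m. \<forall>b<m. latin_subsquare_block q L a b) \<and>
     (\<forall>a<m. \<forall>b<m. \<forall>a'<m. \<forall>b'<m.
        block_symbols q L a b = block_symbols q L a' b' \<longleftrightarrow> (a + b) mod m = (a' + b') mod m)"

end

theory Submission
  imports Defs
begin

(* Give every cell (i,j) three "block coordinates" in {0..<m}: its block row i div q, its
   block column j div q, and its diagonal class (i div q + j div q) mod m.  In a q-step
   square the symbols of diagonal class t form a set of q symbols, disjoint for different t,
   so a cell's diagonal class is determined by its symbol.  Hence in a k-plex P each of the
   three coordinates takes every value t < m on exactly q*k cells (q rows, q columns or
   q symbols, each met k times), and summing each coordinate over P gives q*k*X with
   X = 0 + 1 + ... + (m-1).  Since block row + block column = diagonal class + m*(carry),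
   this yields q*k*X = m*D for an integer D; with 2X = m(m-1) this becomes
   q*k*(m-1) = 2D, impossible as q, k and m-1 are odd. *)

lemma card_preimage_constant_fibres:
  assumes "finite P" "finite J" "\<And>i. i \<in> J \<Longrightarrow> card {c \<in> P. g c = i} = k"
  shows "card {c \<in> P. g c \<in> J} = k * card J"
proof -
  have "{c \<in> P. g c \<in> J} = (\<Union>i\<in>J. {c \<in> P. g c = i})" by blast
  also have "card \<dots> = (\<Sum>i\<in>J. card {c \<in> P. g c = i})"
    using assms(1,2) by (intro card_UN_disjoint) auto
  finally show ?thesis using assms(3) by simp
qed

lemma sum_constant_fibres:
  fixes g :: "'a \<Rightarrow> nat"
  assumes "finite P" "finite I" "g ` P \<subseteq> I" "\<And>i. i \<in> I \<Longrightarrow> card {c \<in> P. g c = i} = k"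
  shows "(\<Sum>c\<in>P. g c) = k * (\<Sum>i\<in>I. i)"
proof -
  have "(\<Sum>c\<in>P. g c) = (\<Sum>i\<in>I. \<Sum>c\<in>{c \<in> P. g c = i}. g c)"
    using assms(1-3) by (rule sum.group[symmetric])
  also have "\<dots> = (\<Sum>i\<in>I. k * i)"
    using assms(4) by (intro sum.cong) auto
  finally show ?thesis by (simp add: sum_distrib_left)
qed

lemma sum_mod_div:
  fixes f :: "'a \<Rightarrow> nat"
  shows "(\<Sum>c\<in>A. f c) = (\<Sum>c\<in>A. f c mod m) + m * (\<Sum>c\<in>A. f c div m)"
  by (simp add: sum.distrib[symmetric] sum_distrib_left)

lemma double_sum_lessThan: "2 * (\<Sum>t<m. t) = m * (m - 1::nat)"
proof (induction m)
  case (Suc m)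
  then show ?case by (cases m) (auto simp: algebra_simps)
qed simp

text \<open>The arithmetic core: r * (0 + 1 + ... + (m-1)) is not a multiple of m when r is odd
  and m is even, since it equals m * (r * (m-1) / 2) with r * (m-1) odd.\<close>
lemma odd_times_triangular_not_multiple:
  fixes r m D :: nat
  assumes "odd r" "even m" "m > 0"
  shows "r * (\<Sum>t<m. t) \<noteq> m * D"
proof
  assume "r * (\<Sum>t<m. t) = m * D"
  then have "m * (r * (m - 1)) = m * (2 * D)"
    using double_sum_lessThan[of m] by (metis mult.left_commute)
  then have "r * (m - 1) = 2 * D" using assms(3) by simp
  moreover have "odd (r * (m - 1))" using assms by simp
  ultimately show False by simp
qed

lemma in_block_range_iff:
  fixes q :: nat assumes "q > 0"
  shows "x \<in> block_range q a \<longleftrightarrow> x div q = a"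
proof
  assume "x \<in> block_range q a"
  then show "x div q = a" unfolding block_range_def by (intro div_nat_eqI) (auto simp: algebra_simps)
next
  assume "x div q = a"
  moreover have "x = x div q * q + x mod q" "x mod q < q"
    using assms by simp_all
  ultimately show "x \<in> block_range q a" unfolding block_range_def by auto
qed

lemma card_block_range: "card (block_range q a) = q"
  by (simp add: block_range_def)

lemma block_range_subset:
  fixes q :: nat assumes "a < m"
  shows "block_range q a \<subseteq> {0..<m * q}"
proof -
  have "a * q + q \<le> m * q" using assms by (metis Suc_leI add.commute mult_Suc mult_le_mono1)
  then show ?thesis unfolding block_range_def by auto
qed

lemma kplex_finite: "is_kplex n k L P \<Longrightarrow> finite P"
  unfolding is_kplex_def by (meson finite_SigmaI finite_atLeastLessThan finite_subset)

lemma kplex_row_count: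
  assumes "is_kplex n k L P" "i < n"
  shows "card {c \<in> P. fst c = i} = k"
proof -
  have "{c \<in> P. fst c = i} = Pair i ` {j. (i, j) \<in> P}" by force
  then show ?thesis using assms unfolding is_kplex_def by (simp add: card_image inj_on_def)
qed

lemma kplex_column_count:
  assumes "is_kplex n k L P" "j < n"
  shows "card {c \<in> P. snd c = j} = k"
proof -
  have "{c \<in> P. snd c = j} = (\<lambda>i. (i, j)) ` {i. (i, j) \<in> P}" by force
  then show ?thesis using assms unfolding is_kplex_def by (simp add: card_image inj_on_def)
qed

text \<open>A block row (or block column) consists of q rows (columns), each meeting the k-plex
  in k cells; g stands for the row or the column projection.\<close>
lemma kplex_block_count:
  fixes q :: nat
  assumes "q > 0" "finite P" "a < m" "\<And>i. i < m * q \<Longrightarrow> card {c \<in> P. g c = i} = k"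
  shows "card {c \<in> P. g c div q = a} = q * k"
proof -
  have "{c \<in> P. g c div q = a} = {c \<in> P. g c \<in> block_range q a}"
    using in_block_range_iff[OF assms(1)] by blast
  also have "card \<dots> = k * card (block_range q a)"
  proof (rule card_preimage_constant_fibres[OF assms(2)])
    fix i assume "i \<in> block_range q a"
    then have "i < m * q" using block_range_subset[OF assms(3), of q] by auto
    then show "card {c \<in> P. g c = i} = k" by (rule assms(4))
  qed (simp add: block_range_def)
  finally show ?thesis by (simp add: card_block_range)
qed

text \<open>The symbols of diagonal class t, i.e.\ of every block (a,b) with a + b = t mod m.\<close>
definition diagonal_symbols :: "nat \<Rightarrow> (nat \<Rightarrow> nat \<Rightarrow> nat) \<Rightarrow> nat \<Rightarrow> nat set" where
  "diagonal_symbols q L t = block_symbols q L 0 t"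

context
  fixes m q :: nat and L :: "nat \<Rightarrow> nat \<Rightarrow> nat"
  assumes q_pos: "q > 0" and m_pos: "m > 0"
    and latin: "latin_square (m * q) L" and step: "q_step_type m q L"
begin

lemma block_symbols_diagonal:
  assumes "a < m" "b < m"
  shows "block_symbols q L a b = diagonal_symbols q L ((a + b) mod m)"
  using step assms m_pos unfolding q_step_type_def diagonal_symbols_def by simp

lemma symbol_in_diagonal:
  assumes "i < m * q" "j < m * q"
  shows "L i j \<in> diagonal_symbols q L ((i div q + j div q) mod m)"
proof -
  have "i div q < m" "j div q < m" using assms by (simp_all add: less_mult_imp_div_less)
  moreover have "L i j \<in> block_symbols q L (i div q) (j div q)"
    unfolding block_symbols_def using in_block_range_iff[OF q_pos] by blast
  ultimately show ?thesis using block_symbols_diagonal by simp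
qed

lemma diagonal_symbols_row0:
  assumes "t < m"
  shows "diagonal_symbols q L t = (\<lambda>j. L 0 j) ` block_range q t"
proof -
  have "latin_subsquare_block q L 0 t" using step assms m_pos unfolding q_step_type_def by blast
  moreover have "0 \<in> block_range q 0" using q_pos by (simp add: block_range_def)
  ultimately have "bij_betw (\<lambda>j. L 0 j) (block_range q t) (block_symbols q L 0 t)"
    unfolding latin_subsquare_block_def by blast
  then show ?thesis by (simp add: diagonal_symbols_def bij_betw_def)
qed

lemma card_diagonal_symbols:
  assumes "t < m"
  shows "card (diagonal_symbols q L t) = q"
  using step assms m_pos unfolding q_step_type_def latin_subsquare_block_def diagonal_symbols_def
  by simp

lemma row0_bij: "bij_betw (\<lambda>j. L 0 j) {0..<m * q} {0..<m * q}"
  using latin m_pos q_pos unfolding latin_square_def by simp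

lemma diagonal_symbols_subset:
  assumes "t < m"
  shows "diagonal_symbols q L t \<subseteq> {0..<m * q}"
proof -
  have "(\<lambda>j. L 0 j) ` block_range q t \<subseteq> (\<lambda>j. L 0 j) ` {0..<m * q}"
    using block_range_subset[OF assms] by (rule image_mono)
  then show ?thesis
    using diagonal_symbols_row0[OF assms] bij_betw_imp_surj_on[OF row0_bij] by simp
qed

text \<open>Different diagonal classes use disjoint symbol sets, because row 0 is injective.\<close>
lemma diagonal_symbols_disjoint:
  assumes "t1 < m" "t2 < m" "t1 \<noteq> t2"
  shows "diagonal_symbols q L t1 \<inter> diagonal_symbols q L t2 = {}"
proof -
  have "inj_on (\<lambda>j. L 0 j) {0..<m * q}" using row0_bij bij_betw_imp_inj_on by blast
  then have "(\<lambda>j. L 0 j) ` block_range q t1 \<inter> (\<lambda>j. L 0 j) ` block_range q t2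
      = (\<lambda>j. L 0 j) ` (block_range q t1 \<inter> block_range q t2)"
    using block_range_subset assms(1,2) by (simp add: inj_on_image_Int)
  moreover have "block_range q t1 \<inter> block_range q t2 = {}"
    using assms(3) by (auto simp: in_block_range_iff[OF q_pos])
  ultimately show ?thesis using diagonal_symbols_row0 assms(1,2) by simp
qed

lemma diagonal_class_iff_symbol:
  assumes "i < m * q" "j < m * q" "t < m"
  shows "(i div q + j div q) mod m = t \<longleftrightarrow> L i j \<in> diagonal_symbols q L t"
proof -
  let ?s = "(i div q + j div q) mod m"
  have "?s < m" using m_pos by simp
  moreover have "L i j \<in> diagonal_symbols q L ?s" using symbol_in_diagonal[OF assms(1,2)] .
  ultimately show ?thesis using diagonal_symbols_disjoint[OF _ assms(3)] by blast
qed

text \<open>A diagonal class meets a k-plex in q * k cells: q symbols, each met k times.\<close>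
lemma kplex_diagonal_count:
  assumes "is_kplex (m * q) k L P" "t < m"
  shows "card {c \<in> P. (fst c div q + snd c div q) mod m = t} = q * k"
proof -
  have P_sub: "P \<subseteq> {0..<m * q} \<times> {0..<m * q}" using assms(1) unfolding is_kplex_def by simp
  have "{c \<in> P. (fst c div q + snd c div q) mod m = t}
        = {c \<in> P. L (fst c) (snd c) \<in> diagonal_symbols q L t}"
  proof (rule Collect_cong)
    fix c
    show "(c \<in> P \<and> (fst c div q + snd c div q) mod m = t)
        \<longleftrightarrow> (c \<in> P \<and> L (fst c) (snd c) \<in> diagonal_symbols q L t)"
    proof (cases "c \<in> P")
      case True
      then have "fst c < m * q" "snd c < m * q" using P_sub by auto
      then show ?thesis using diagonal_class_iff_symbol[OF _ _ assms(2)] True by simp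
    qed simp
  qed
  also have "card \<dots> = k * card (diagonal_symbols q L t)"
  proof (rule card_preimage_constant_fibres[OF kplex_finite[OF assms(1)]])
    show "finite (diagonal_symbols q L t)"
      using diagonal_symbols_subset[OF assms(2)] by (rule finite_subset) simp
    fix s assume "s \<in> diagonal_symbols q L t"
    then have "s < m * q" using diagonal_symbols_subset[OF assms(2)] by auto
    then show "card {c \<in> P. L (fst c) (snd c) = s} = k" using assms(1) unfolding is_kplex_def by blast
  qed
  finally show ?thesis by (simp add: card_diagonal_symbols[OF assms(2)])
qed

text \<open>Summed over a k-plex, each of the three block coordinates of a cell (block row,
  block column, diagonal class) gives q * k * (0 + 1 + ... + (m-1)), because each value
  below m is taken exactly q * k times.\<close>
lemma kplex_coordinate_sums:
  assumes kplex: "is_kplex (m * q) k L P"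
  shows "(\<Sum>c\<in>P. fst c div q) = q * k * (\<Sum>t<m. t)"
    and "(\<Sum>c\<in>P. snd c div q) = q * k * (\<Sum>t<m. t)"
    and "(\<Sum>c\<in>P. (fst c div q + snd c div q) mod m) = q * k * (\<Sum>t<m. t)"
proof -
  have fin: "finite P" using kplex_finite[OF kplex] .
  have "fst c < m * q" "snd c < m * q" if "c \<in> P" for c
    using kplex that unfolding is_kplex_def by auto
  then have in_range: "(\<lambda>c. fst c div q) ` P \<subseteq> {..<m}" "(\<lambda>c. snd c div q) ` P \<subseteq> {..<m}"
    "(\<lambda>c. (fst c div q + snd c div q) mod m) ` P \<subseteq> {..<m}"
    using m_pos by (auto intro: less_mult_imp_div_less)
  show "(\<Sum>c\<in>P. fst c div q) = q * k * (\<Sum>t<m. t)"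
    using sum_constant_fibres[OF fin finite_lessThan in_range(1)]
      kplex_block_count[where g = fst, OF q_pos fin _ kplex_row_count[OF kplex]] by simp
  show "(\<Sum>c\<in>P. snd c div q) = q * k * (\<Sum>t<m. t)"
    using sum_constant_fibres[OF fin finite_lessThan in_range(2)]
      kplex_block_count[where g = snd, OF q_pos fin _ kplex_column_count[OF kplex]] by simp
  show "(\<Sum>c\<in>P. (fst c div q + snd c div q) mod m) = q * k * (\<Sum>t<m. t)"
    using sum_constant_fibres[OF fin finite_lessThan in_range(3)]
      kplex_diagonal_count[OF kplex] by simp
qed

end

theorem theorem5p1:
  fixes q k m :: nat and L :: "nat \<Rightarrow> nat \<Rightarrow> nat"
  assumes "odd q" "q > 0" "odd k" "k > 0" "even m" "m > 0"
    and "latin_square (m * q) L"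
    and "q_step_type m q L"
  shows "\<not> (\<exists>P. is_kplex (m * q) k L P)"
proof
  assume "\<exists>P. is_kplex (m * q) k L P"
  then obtain P where kplex: "is_kplex (m * q) k L P" by blast
  define D where "D = (\<Sum>c\<in>P. (fst c div q + snd c div q) div m)"
  have "(\<Sum>c\<in>P. fst c div q) + (\<Sum>c\<in>P. snd c div q)
      = (\<Sum>c\<in>P. (fst c div q + snd c div q) mod m) + m * D"
    unfolding D_def sum.distrib[symmetric] by (rule sum_mod_div)
  then have "(q * k) * (\<Sum>t<m. t) = m * D"
    using kplex_coordinate_sums[OF assms(2,6-8) kplex] by linarith
  moreover have "odd (q * k)" using assms(1,3) by simp
  ultimately show False using odd_times_triangular_not_multiple assms(5,6) by blast
qed

end
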